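(* Assume (A1), (A2), (B1), (B2) below. Then there is a constant $L$ depending only on $k$ and $\pi$ such that for all $z,z'\in\mathbb R^d$ and all $\mu,\mu'\in\mathcal P_2(\mathbb R^d)$, $$\Big\|P_\mu\nabla\log\Big(\frac{\mu}{\pi}\Big)(z)-P_{\mu'}\nabla\log\Big(\frac{\mu'}{\pi}\Big)(z')\Big\|\le L\big(\|z-z'\|+W_2(\mu,\mu')\big).$$ (A1) There exists $B>0$ with $\|k(x,\cdot)\|_{\mathcal H_0}\le B$ and $\big(\sum_{i=1}^d\|\partial_{x_i}k(x,\cdot)\|_{\mathcal H_0}^2\big)^{1/2}\le B$ for all $x$. (A2) $H_V$ is well defined and $\|H_V(x)\|_{op}\le M$ for all $x$, for some $M>0$. (B1) There exists $C_V$ with $\|\nabla V(x)\|\le C_V$ for all $x$. (B2) There exists $D>0$ such that $k$ is continuous and $|k(x,x')-k(y,y')|\le D(\|x-y\|+\|x'-y'\|)$, and $k$ is continuously differentiable with $\|\nabla k(x,x')-\nabla k(y,y')\|\le D(\|x-y\|+\|x'-y'\|)$ for all $x,x',y,y'$.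
   Context: Target $\pi\propto e^{-V}$ on $\mathbb R^d$, $V\in C^2$. $k$ positive semi-definite kernel with RKHS $\mathcal H_0$, $\mathcal H=\mathcal H_0^d$. For any $\mu\in\mathcal P_2(\mathbb R^d)$ (possibly discrete), $P_\mu\nabla\log(\mu/\pi)(z)=-\int\big[\nabla\log\pi(x)k(x,z)+\nabla_x k(x,z)\big]d\mu(x)$. $W_2$ is the 2-Wasserstein distance. *)

theory Defs
  imports "HOL-Analysis.Analysis" "HOL-Probability.Probability"
begin

definition grad :: "('a::euclidean_space \<Rightarrow> real) \<Rightarrow> 'a \<Rightarrow> 'a" where
  "grad f x = (SOME g. (f has_derivative (\<lambda>h. g \<bullet> h)) (at x))"

definition hessian :: "('a::euclidean_space \<Rightarrow> real) \<Rightarrow> 'a \<Rightarrow> 'a \<Rightarrow> 'a" where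
  "hessian V x = frechet_derivative (grad V) (at x)"

definition psd_kernel :: "('a \<Rightarrow> 'a \<Rightarrow> real) \<Rightarrow> bool" where
  "psd_kernel k \<longleftrightarrow> (\<forall>x y. k x y = k y x) \<and>
     (\<forall>n (xs :: nat \<Rightarrow> 'a) (c :: nat \<Rightarrow> real).
        0 \<le> (\<Sum>i<n. \<Sum>j<n. c i * c j * k (xs i) (xs j)))"

text \<open>RKHS norm of a function f in the RKHS H0 of k, via the standard characterization
  of the RKHS: f belongs to H0 with norm at most C iff
  |sum c_i f(x_i)| <= C * || sum c_i k(x_i, .) ||_H0 for all finite combinations.\<close>
definition rkhs_bounded :: "('a \<Rightarrow> 'a \<Rightarrow> real) \<Rightarrow> ('a \<Rightarrow> real) \<Rightarrow> real \<Rightarrow> bool" where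
  "rkhs_bounded k f C \<longleftrightarrow>
     (\<forall>n (xs :: nat \<Rightarrow> 'a) (c :: nat \<Rightarrow> real).
        \<bar>\<Sum>i<n. c i * f (xs i)\<bar> \<le> C * sqrt (\<Sum>i<n. \<Sum>j<n. c i * c j * k (xs i) (xs j)))"

definition in_rkhs :: "('a \<Rightarrow> 'a \<Rightarrow> real) \<Rightarrow> ('a \<Rightarrow> real) \<Rightarrow> bool" where
  "in_rkhs k f \<longleftrightarrow> (\<exists>C. rkhs_bounded k f C)"

definition rkhs_norm :: "('a \<Rightarrow> 'a \<Rightarrow> real) \<Rightarrow> ('a \<Rightarrow> real) \<Rightarrow> real" where
  "rkhs_norm k f = Inf {C. 0 \<le> C \<and> rkhs_bounded k f C}"

definition P2 :: "'a::euclidean_space measure set" where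
  "P2 = {\<mu>. prob_space \<mu> \<and> sets \<mu> = sets borel \<and> (\<integral>\<^sup>+x. ennreal ((norm x)\<^sup>2) \<partial>\<mu>) < \<infinity>}"

definition couplings :: "'a::euclidean_space measure \<Rightarrow> 'a measure \<Rightarrow> ('a \<times> 'a) measure set" where
  "couplings \<mu> \<nu> = {\<gamma>. prob_space \<gamma> \<and> sets \<gamma> = sets (borel \<Otimes>\<^sub>M borel) \<and>
       distr \<gamma> borel fst = \<mu> \<and> distr \<gamma> borel snd = \<nu>}"

definition W2 :: "'a::euclidean_space measure \<Rightarrow> 'a measure \<Rightarrow> real" where
  "W2 \<mu> \<nu> = sqrt (enn2real (INF \<gamma>\<in>couplings \<mu> \<nu>.
       \<integral>\<^sup>+p. ennreal ((norm (fst p - snd p))\<^sup>2) \<partial>\<gamma>))"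

definition target_density :: "('a::euclidean_space \<Rightarrow> real) \<Rightarrow> 'a \<Rightarrow> real" where
  "target_density V x = exp (- V x) / (\<integral>y. exp (- V y) \<partial>lborel)"

text \<open>P_mu grad log(mu/pi)(z) = - int [grad log pi(x) k(x,z) + grad_x k(x,z)] dmu(x).\<close>
definition stein_field ::
  "('a::euclidean_space \<Rightarrow> 'a \<Rightarrow> real) \<Rightarrow> ('a \<Rightarrow> real) \<Rightarrow> 'a measure \<Rightarrow> 'a \<Rightarrow> 'a" where
  "stein_field k V \<mu> z = - (\<integral>x. (k x z *\<^sub>R grad (\<lambda>y. ln (target_density V y)) x
                                 + grad (\<lambda>y. k y z) x) \<partial>\<mu>)"

end

theory Submission
  imports Defs
begin

text \<open>After rewriting \<open>\<nabla> log \<pi> = -\<nabla>V\<close>, the Stein field is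
  \<open>\<integral> F(x, z) d\<mu>(x)\<close> with \<open>F(x, z) = k(x, z) \<nabla>V(x) - \<nabla>\<^sub>1 k(x, z)\<close>.
  This integrand is jointly Lipschitz in \<open>(x, z)\<close>: the reproducing property bounds
  \<open>|k| \<le> B\<^sup>2\<close>, (B2) makes \<open>k\<close> and \<open>\<nabla>k\<close> Lipschitz, (B1) bounds \<open>\<nabla>V\<close> and the Hessian bound
  (A2) makes \<open>\<nabla>V\<close> Lipschitz by the mean value inequality. The dependence on \<open>z\<close> is then
  immediate, and for the dependence on \<open>\<mu>\<close> one integrates \<open>F(x, z) - F(y, z)\<close> against an
  arbitrary coupling of \<open>\<mu>\<close> and \<open>\<mu>'\<close>; by Jensen the mean transport distance is at most
  the square root of the quadratic transport cost, and the infimum over couplings gives \<open>W\<^sub>2\<close>.\<close>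

section \<open>Gradients and the target density\<close>

lemma grad_eqI:
  fixes f :: "'a::euclidean_space \<Rightarrow> real"
  assumes "(f has_derivative (\<lambda>h. g \<bullet> h)) (at x)"
  shows "grad f x = g"
proof -
  have "(f has_derivative (\<lambda>h. grad f x \<bullet> h)) (at x)"
    unfolding grad_def using assms by (rule someI)
  then have "(\<lambda>h. grad f x \<bullet> h) = (\<lambda>h. g \<bullet> h)"
    using assms by (rule has_derivative_unique)
  then show ?thesis
    by (metis euclidean_eqI)
qed

lemma has_derivative_grad:
  fixes f :: "'a::euclidean_space \<Rightarrow> real"
  assumes "f differentiable (at x)"
  shows "(f has_derivative (\<lambda>h. grad f x \<bullet> h)) (at x)"
proof -
  obtain f' where f': "(f has_derivative f') (at x)"
    using assms by (auto simp: differentiable_def)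
  have "f' = (\<lambda>h. adjoint f' 1 \<bullet> h)"
    using adjoint_works[OF has_derivative_linear[OF f'], of _ 1] by (auto simp: inner_commute)
  with f' show ?thesis
    using grad_eqI by metis
qed

lemma grad_partial_fst:
  fixes f :: "'a::euclidean_space \<times> 'b::euclidean_space \<Rightarrow> real"
  assumes "f differentiable (at (x, z))"
  shows "grad (\<lambda>y. f (y, z)) x = fst (grad f (x, z))"
proof (rule grad_eqI)
  have "((f \<circ> (\<lambda>y. (y, z))) has_derivative ((\<lambda>h. grad f (x, z) \<bullet> h) \<circ> (\<lambda>h. (h, 0)))) (at x)"
    by (rule diff_chain_at) (auto intro!: derivative_eq_intros has_derivative_grad assms)
  then show "((\<lambda>y. f (y, z)) has_derivative (\<lambda>h. fst (grad f (x, z)) \<bullet> h)) (at x)"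
    by (cases "grad f (x, z)") (simp add: o_def)
qed

lemma norm_grad_diff_le_hessian_bound:
  fixes V :: "'a::euclidean_space \<Rightarrow> real"
  assumes "\<And>x. grad V differentiable (at x)" and "\<And>x. onorm (hessian V x) \<le> M"
  shows "norm (grad V x - grad V y) \<le> M * norm (x - y)"
proof (rule differentiable_bound[OF convex_UNIV])
  show "\<And>x. x \<in> UNIV \<Longrightarrow> (grad V has_derivative hessian V x) (at x within UNIV)"
    using assms(1) unfolding hessian_def by (simp add: frechet_derivative_works)
qed (use assms(2) in auto)

lemma integral_lborel_pos:
  fixes f :: "'a::euclidean_space \<Rightarrow> real"
  assumes "integrable lborel f" and "\<And>x. 0 < f x"
  shows "0 < integral\<^sup>L lborel f"
proof -
  have "integral\<^sup>L lborel f \<noteq> 0"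
  proof
    assume "integral\<^sup>L lborel f = 0"
    then have "AE x in lborel. f x = 0"
      using integral_nonneg_eq_0_iff_AE[OF assms(1)] assms(2) by (auto intro: less_imp_le)
    then have "AE x in (lborel :: 'a measure). False"
      by (rule eventually_mono) (metis assms(2) less_irrefl)
    then show False
      by (simp add: ae_filter_eq_bot_iff trivial_limit_def[symmetric])
  qed
  moreover have "0 \<le> integral\<^sup>L lborel f"
    using assms(2) by (auto intro: integral_nonneg_AE less_imp_le)
  ultimately show ?thesis
    by simp
qed

lemma grad_ln_target_density:
  fixes V :: "'a::euclidean_space \<Rightarrow> real"
  assumes "\<And>x. V differentiable (at x)" and "integrable lborel (\<lambda>x. exp (- V x))"
  shows "grad (\<lambda>y. ln (target_density V y)) x = - grad V x"
proof (rule grad_eqI)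
  define Z where "Z = (\<integral>y. exp (- V y) \<partial>lborel)"
  have "0 < Z"
    unfolding Z_def using assms(2) by (rule integral_lborel_pos) simp
  then have "(\<lambda>y. ln (target_density V y)) = (\<lambda>y. - V y - ln Z)"
    by (auto simp: target_density_def Z_def[symmetric] ln_div)
  moreover have "((\<lambda>y. - V y - ln Z) has_derivative (\<lambda>h. - grad V x \<bullet> h)) (at x)"
    by (auto intro!: derivative_eq_intros has_derivative_grad assms(1))
  ultimately show "((\<lambda>y. ln (target_density V y)) has_derivative (\<lambda>h. - grad V x \<bullet> h)) (at x)"
    by simp
qed

section \<open>Reproducing kernels\<close>

lemma psd_kernel_diag_nonneg:
  assumes "psd_kernel k"
  shows "0 \<le> k x x"
  using assms[unfolded psd_kernel_def, THEN conjunct2, rule_format, where n=1 and xs="\<lambda>_. x" and c="\<lambda>_. 1"]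
  by simp

lemma rkhs_bounded_mono:
  assumes "psd_kernel k" and "rkhs_bounded k f C" and "C \<le> C'"
  shows "rkhs_bounded k f C'"
  unfolding rkhs_bounded_def
proof (intro allI)
  fix n and xs :: "nat \<Rightarrow> 'a" and c :: "nat \<Rightarrow> real"
  let ?q = "\<Sum>i<n. \<Sum>j<n. c i * c j * k (xs i) (xs j)"
  have "0 \<le> ?q"
    using assms(1) by (simp add: psd_kernel_def)
  then have "C * sqrt ?q \<le> C' * sqrt ?q"
    using assms(3) by (intro mult_right_mono) auto
  with assms(2) show "\<bar>\<Sum>i<n. c i * f (xs i)\<bar> \<le> C' * sqrt ?q"
    unfolding rkhs_bounded_def by (meson order_trans)
qed

lemma rkhs_bounded_pointwise:
  assumes "rkhs_bounded k f C"
  shows "\<bar>f x\<bar> \<le> C * sqrt (k x x)"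
  using assms[unfolded rkhs_bounded_def, rule_format, where n=1 and xs="\<lambda>_. x" and c="\<lambda>_. 1"]
  by simp

lemma rkhs_norm_nonempty:
  assumes "psd_kernel k" and "in_rkhs k f"
  shows "{C. 0 \<le> C \<and> rkhs_bounded k f C} \<noteq> {}"
proof -
  obtain C where "rkhs_bounded k f C"
    using assms(2) by (auto simp: in_rkhs_def)
  then have "rkhs_bounded k f (max C 0)"
    using assms(1) max.cobounded1 rkhs_bounded_mono by blast
  then have "max C 0 \<in> {C. 0 \<le> C \<and> rkhs_bounded k f C}"
    by simp
  then show ?thesis
    by blast
qed

lemma rkhs_norm_nonneg:
  assumes "psd_kernel k" and "in_rkhs k f"
  shows "0 \<le> rkhs_norm k f"
  unfolding rkhs_norm_def by (rule cInf_greatest[OF rkhs_norm_nonempty[OF assms]]) simp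

lemma abs_le_rkhs_norm:
  assumes "psd_kernel k" and "in_rkhs k f"
  shows "\<bar>f x\<bar> \<le> rkhs_norm k f * sqrt (k x x)"
proof -
  let ?S = "{C. 0 \<le> C \<and> rkhs_bounded k f C}"
  have bound: "\<bar>f x\<bar> \<le> C * sqrt (k x x)" if "C \<in> ?S" for C
    using that by (auto intro: rkhs_bounded_pointwise)
  show ?thesis
  proof (cases "k x x = 0")
    case True
    obtain C where "C \<in> ?S"
      using rkhs_norm_nonempty[OF assms] by blast
    then have "\<bar>f x\<bar> \<le> C * sqrt (k x x)"
      by (rule bound)
    then show ?thesis
      using True by simp
  next
    case False
    then have pos: "0 < sqrt (k x x)"
      using psd_kernel_diag_nonneg[OF assms(1), of x] by simp
    have "\<bar>f x\<bar> / sqrt (k x x) \<le> rkhs_norm k f"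
      unfolding rkhs_norm_def
    proof (rule cInf_greatest[OF rkhs_norm_nonempty[OF assms]])
      fix C
      assume "C \<in> ?S"
      then show "\<bar>f x\<bar> / sqrt (k x x) \<le> C"
        using bound pos by (simp add: divide_le_eq)
    qed
    then show ?thesis
      using pos by (simp add: divide_le_eq)
  qed
qed

lemma psd_kernel_abs_le:
  assumes "psd_kernel k" and "\<And>x. in_rkhs k (k x)" and "\<And>x. rkhs_norm k (k x) \<le> B"
  shows "\<bar>k x y\<bar> \<le> B\<^sup>2"
proof -
  have B: "0 \<le> B"
    using rkhs_norm_nonneg[OF assms(1,2)] assms(3) order_trans by blast
  have diag: "sqrt (k y y) \<le> B"
  proof (cases "k y y = 0")
    case False
    then have pos: "0 < sqrt (k y y)"
      using psd_kernel_diag_nonneg[OF assms(1), of y] by simp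
    have "sqrt (k y y) * sqrt (k y y) = \<bar>k y y\<bar>"
      using psd_kernel_diag_nonneg[OF assms(1), of y] by simp
    also have "\<dots> \<le> rkhs_norm k (k y) * sqrt (k y y)"
      by (rule abs_le_rkhs_norm[OF assms(1,2)])
    also have "\<dots> \<le> B * sqrt (k y y)"
      using assms(3) pos by (intro mult_right_mono) auto
    finally show ?thesis
      using pos by (rule mult_right_le_imp_le)
  qed (use B in simp)
  have "\<bar>k x y\<bar> \<le> rkhs_norm k (k x) * sqrt (k y y)"
    by (rule abs_le_rkhs_norm[OF assms(1,2)])
  also have "\<dots> \<le> B * B"
    using assms(3) diag rkhs_norm_nonneg[OF assms(1,2)] B psd_kernel_diag_nonneg[OF assms(1)]
    by (intro mult_mono) auto
  finally show ?thesis
    by (simp add: power2_eq_square)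
qed

section \<open>Quadratic Wasserstein distance\<close>

definition transport_cost :: "('a::euclidean_space \<times> 'a) measure \<Rightarrow> ennreal" where
  "transport_cost \<gamma> = (\<integral>\<^sup>+p. ennreal ((norm (fst p - snd p))\<^sup>2) \<partial>\<gamma>)"

lemma W2_eq_transport_cost: "W2 \<mu> \<nu> = sqrt (enn2real (INF \<gamma>\<in>couplings \<mu> \<nu>. transport_cost \<gamma>))"
  unfolding W2_def transport_cost_def ..

lemma P2D:
  assumes "\<mu> \<in> P2"
  shows "prob_space \<mu>" and "sets \<mu> = sets borel"
    and "(\<integral>\<^sup>+x. ennreal ((norm x)\<^sup>2) \<partial>\<mu>) < \<infinity>" and "integrable \<mu> (\<lambda>x. (norm x)\<^sup>2)"
proof -
  show "prob_space \<mu>" and sets: "sets \<mu> = sets borel"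
    and moment: "(\<integral>\<^sup>+x. ennreal ((norm x)\<^sup>2) \<partial>\<mu>) < \<infinity>"
    using assms by (auto simp: P2_def)
  have "(\<lambda>x. (norm x)\<^sup>2) \<in> borel_measurable \<mu>"
    by (subst measurable_cong_sets[OF sets refl]) measurable
  with moment show "integrable \<mu> (\<lambda>x. (norm x)\<^sup>2)"
    by (simp add: integrable_iff_bounded)
qed

lemma couplingsD:
  assumes "\<gamma> \<in> couplings \<mu> \<nu>"
  shows "prob_space \<gamma>" and "sets \<gamma> = sets (borel \<Otimes>\<^sub>M borel)"
    and "distr \<gamma> borel fst = \<mu>" and "distr \<gamma> borel snd = \<nu>"
    and "fst \<in> measurable \<gamma> borel" and "snd \<in> measurable \<gamma> borel"
proof -
  show sets: "sets \<gamma> = sets (borel \<Otimes>\<^sub>M borel)"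
    and "prob_space \<gamma>" "distr \<gamma> borel fst = \<mu>" "distr \<gamma> borel snd = \<nu>"
    using assms by (auto simp: couplings_def)
  show "fst \<in> measurable \<gamma> borel" "snd \<in> measurable \<gamma> borel"
    by (subst measurable_cong_sets[OF sets refl], measurable)+
qed

lemma (in prob_space) distr_pair_snd:
  assumes "prob_space N"
  shows "distr (N \<Otimes>\<^sub>M M) M snd = M"
proof (intro measure_eqI)
  fix A
  assume A: "A \<in> sets (distr (N \<Otimes>\<^sub>M M) M snd)"
  then have "emeasure (distr (N \<Otimes>\<^sub>M M) M snd) A = emeasure (N \<Otimes>\<^sub>M M) (space N \<times> A)"
    by (auto simp: emeasure_distr space_pair_measure dest: sets.sets_into_space
        intro!: arg_cong2[where f=emeasure])
  with A assms show "emeasure (distr (N \<Otimes>\<^sub>M M) M snd) A = emeasure M A"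
    by (simp add: emeasure_pair_measure_Times prob_space.emeasure_space_1)
qed simp

lemma pair_measure_in_couplings:
  assumes "\<mu> \<in> P2" and "\<nu> \<in> P2"
  shows "\<mu> \<Otimes>\<^sub>M \<nu> \<in> couplings \<mu> \<nu>"
proof -
  note \<mu> = P2D[OF assms(1)] and \<nu> = P2D[OF assms(2)]
  have "distr (\<mu> \<Otimes>\<^sub>M \<nu>) borel fst = distr (\<mu> \<Otimes>\<^sub>M \<nu>) \<mu> fst"
    by (rule distr_cong) (auto simp: \<mu>(2))
  also have "\<dots> = \<mu>"
    using \<nu>(1) by (rule prob_space.distr_pair_fst)
  finally have fst: "distr (\<mu> \<Otimes>\<^sub>M \<nu>) borel fst = \<mu>" .
  have "distr (\<mu> \<Otimes>\<^sub>M \<nu>) borel snd = distr (\<mu> \<Otimes>\<^sub>M \<nu>) \<nu> snd"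
    by (rule distr_cong) (auto simp: \<nu>(2))
  also have "\<dots> = \<nu>"
    using \<nu>(1) \<mu>(1) by (rule prob_space.distr_pair_snd)
  finally have snd: "distr (\<mu> \<Otimes>\<^sub>M \<nu>) borel snd = \<nu>" .
  have "sets (\<mu> \<Otimes>\<^sub>M \<nu>) = sets (borel \<Otimes>\<^sub>M borel)"
    by (rule sets_pair_measure_cong) (auto simp: \<mu>(2) \<nu>(2))
  with fst snd \<mu>(1) \<nu>(1) show ?thesis
    unfolding couplings_def by (auto intro: prob_space_pair)
qed

lemma norm_diff_power2_le:
  fixes a b :: "'a::real_normed_vector"
  shows "(norm (a - b))\<^sup>2 \<le> 2 * (norm a)\<^sup>2 + 2 * (norm b)\<^sup>2"
proof -
  have "(norm (a - b))\<^sup>2 \<le> (norm a + norm b)\<^sup>2"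
    by (intro power_mono norm_triangle_ineq4) simp
  also have "\<dots> \<le> 2 * (norm a)\<^sup>2 + 2 * (norm b)\<^sup>2"
    using sum_squares_ge_zero[of "norm a - norm b" 0] by (simp add: power2_eq_square algebra_simps)
  finally show ?thesis .
qed

lemma transport_cost_finite:
  assumes "\<gamma> \<in> couplings \<mu> \<nu>" and "\<mu> \<in> P2" and "\<nu> \<in> P2"
  shows "transport_cost \<gamma> < \<infinity>"
proof -
  note \<gamma> = couplingsD[OF assms(1)]
  let ?m = "\<lambda>x. ennreal ((norm x)\<^sup>2)"
  have m: "?m \<in> borel_measurable borel"
    by measurable
  have fst: "(\<integral>\<^sup>+x. ?m x \<partial>\<mu>) = (\<integral>\<^sup>+p. ?m (fst p) \<partial>\<gamma>)"
    unfolding \<gamma>(3)[symmetric] by (rule nn_integral_distr[OF \<gamma>(5)]) (simp add: m)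
  have snd: "(\<integral>\<^sup>+x. ?m x \<partial>\<nu>) = (\<integral>\<^sup>+p. ?m (snd p) \<partial>\<gamma>)"
    unfolding \<gamma>(4)[symmetric] by (rule nn_integral_distr[OF \<gamma>(6)]) (simp add: m)
  have "transport_cost \<gamma> \<le> (\<integral>\<^sup>+p. 2 * ?m (fst p) + 2 * ?m (snd p) \<partial>\<gamma>)"
    unfolding transport_cost_def
  proof (rule nn_integral_mono)
    fix p :: "'a \<times> 'a"
    have "ennreal ((norm (fst p - snd p))\<^sup>2) \<le> ennreal (2 * (norm (fst p))\<^sup>2 + 2 * (norm (snd p))\<^sup>2)"
      by (intro ennreal_leI norm_diff_power2_le)
    also have "\<dots> = 2 * ?m (fst p) + 2 * ?m (snd p)"
      by (simp add: ennreal_plus[symmetric] ennreal_mult)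
    finally show "ennreal ((norm (fst p - snd p))\<^sup>2) \<le> 2 * ?m (fst p) + 2 * ?m (snd p)" .
  qed
  also have "\<dots> = 2 * (\<integral>\<^sup>+x. ?m x \<partial>\<mu>) + 2 * (\<integral>\<^sup>+x. ?m x \<partial>\<nu>)"
    using \<gamma>(5,6) by (simp add: nn_integral_add nn_integral_cmult fst snd)
  also have "\<dots> < \<infinity>"
    using P2D(3)[OF assms(2)] P2D(3)[OF assms(3)] by (simp add: ennreal_mult_less_top)
  finally show ?thesis .
qed

lemma integral_dist_le_sqrt_transport_cost:
  assumes "\<gamma> \<in> couplings \<mu> \<nu>" and "\<mu> \<in> P2" and "\<nu> \<in> P2"
  shows "integrable \<gamma> (\<lambda>p. norm (fst p - snd p))"
    and "(\<integral>p. norm (fst p - snd p) \<partial>\<gamma>) \<le> sqrt (enn2real (transport_cost \<gamma>))"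
proof -
  note \<gamma> = couplingsD[OF assms(1)]
  interpret prob_space \<gamma>
    by (rule \<gamma>(1))
  define X where "X p = norm (fst p - snd p)" for p :: "'a \<times> 'a"
  have X: "X \<in> borel_measurable \<gamma>"
    unfolding X_def by (subst measurable_cong_sets[OF \<gamma>(2) refl]) measurable
  have X2: "integrable \<gamma> (\<lambda>p. (X p)\<^sup>2)"
    using borel_measurable_power[OF X, of 2] transport_cost_finite[OF assms]
    unfolding integrable_iff_bounded
    by (simp add: X_def transport_cost_def)
  show X1: "integrable \<gamma> (\<lambda>p. norm (fst p - snd p))"
    unfolding X_def[symmetric] using X X2 by (rule square_integrable_imp_integrable)
  have "transport_cost \<gamma> = ennreal (\<integral>p. (X p)\<^sup>2 \<partial>\<gamma>)"
    unfolding transport_cost_def X_def[symmetric] by (rule nn_integral_eq_integral[OF X2]) simp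
  moreover have "(\<integral>p. X p \<partial>\<gamma>)\<^sup>2 \<le> (\<integral>p. (X p)\<^sup>2 \<partial>\<gamma>)"
    using variance_eq[OF X1[folded X_def] X2] variance_positive[of X] by simp
  ultimately show "(\<integral>p. norm (fst p - snd p) \<partial>\<gamma>) \<le> sqrt (enn2real (transport_cost \<gamma>))"
    unfolding X_def[symmetric] by (simp add: real_le_rsqrt)
qed

lemma le_mult_W2I:
  assumes "\<mu> \<in> P2" and "\<nu> \<in> P2" and "0 \<le> L"
    and bound: "\<And>\<gamma>. \<gamma> \<in> couplings \<mu> \<nu> \<Longrightarrow> a \<le> L * sqrt (enn2real (transport_cost \<gamma>))"
  shows "a \<le> L * W2 \<mu> \<nu>"
proof (cases "a \<le> 0")
  case True
  then show ?thesis
    using assms(3) by (simp add: W2_def order.trans[OF _ mult_nonneg_nonneg])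
next
  case False
  define I where "I = (INF \<gamma>\<in>couplings \<mu> \<nu>. transport_cost \<gamma>)"
  have prod: "\<mu> \<Otimes>\<^sub>M \<nu> \<in> couplings \<mu> \<nu>"
    using assms(1,2) by (rule pair_measure_in_couplings)
  have L: "0 < L"
    using bound[OF prod] False assms(3) by (cases "L = 0") auto
  have "ennreal ((a / L)\<^sup>2) \<le> transport_cost \<gamma>" if \<gamma>: "\<gamma> \<in> couplings \<mu> \<nu>" for \<gamma>
  proof -
    have "a / L \<le> sqrt (enn2real (transport_cost \<gamma>))"
      using bound[OF \<gamma>] L by (simp add: divide_le_eq mult.commute)
    then have "(a / L)\<^sup>2 \<le> (sqrt (enn2real (transport_cost \<gamma>)))\<^sup>2"
      using False L by (intro power_mono) auto
    then have "ennreal ((a / L)\<^sup>2) \<le> ennreal (enn2real (transport_cost \<gamma>))"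
      by (intro ennreal_leI) simp
    also have "\<dots> = transport_cost \<gamma>"
      using transport_cost_finite[OF \<gamma> assms(1,2)] by simp
    finally show ?thesis .
  qed
  then have "ennreal ((a / L)\<^sup>2) \<le> I"
    unfolding I_def by (rule INF_greatest)
  moreover have "I < \<infinity>"
    unfolding I_def using transport_cost_finite[OF prod assms(1,2)] prod by (meson INF_lower le_less_trans)
  ultimately have "(a / L)\<^sup>2 \<le> enn2real I"
    using enn2real_mono by fastforce
  then have "a / L \<le> W2 \<mu> \<nu>"
    unfolding W2_eq_transport_cost I_def[symmetric] by (rule real_le_rsqrt)
  then show ?thesis
    using L by (simp add: divide_le_eq mult.commute)
qed

lemma borel_measurable_lipschitz:
  assumes "L-lipschitz_on UNIV f" and "sets M = sets borel"
  shows "f \<in> borel_measurable M"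
  using lipschitz_on_continuous_on[OF assms(1)]
  by (subst measurable_cong_sets[OF assms(2) refl]) (rule borel_measurable_continuous_onI)

lemma integrable_lipschitz_P2:
  fixes f :: "'a::euclidean_space \<Rightarrow> 'b::{banach, second_countable_topology}"
  assumes "L-lipschitz_on UNIV f" and "\<mu> \<in> P2"
  shows "integrable \<mu> f"
proof (rule Bochner_Integration.integrable_bound)
  note \<mu> = P2D[OF assms(2)]
  interpret prob_space \<mu>
    by (rule \<mu>(1))
  have "norm \<in> borel_measurable \<mu>"
    by (subst measurable_cong_sets[OF \<mu>(2) refl]) measurable
  then have "integrable \<mu> norm"
    using \<mu>(4) by (rule square_integrable_imp_integrable)
  then show "integrable \<mu> (\<lambda>x. norm (f 0) + L * norm x)"
    by auto
  show "f \<in> borel_measurable \<mu>"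
    using assms(1) \<mu>(2) by (rule borel_measurable_lipschitz)
  have "norm (f x) \<le> norm (f 0) + L * norm x" for x
    using lipschitz_onD[OF assms(1), of x 0] norm_triangle_sub[of "f x" "f 0"]
    by (simp add: dist_norm)
  then show "AE x in \<mu>. norm (f x) \<le> norm (norm (f 0) + L * norm x)"
    by (intro AE_I2) (simp add: order_trans[OF _ abs_ge_self])
qed

lemma integral_lipschitz_W2:
  fixes f :: "'a::euclidean_space \<Rightarrow> 'b::{banach, second_countable_topology}"
  assumes f: "L-lipschitz_on UNIV f" and "\<mu> \<in> P2" and "\<nu> \<in> P2"
  shows "norm ((\<integral>x. f x \<partial>\<mu>) - (\<integral>x. f x \<partial>\<nu>)) \<le> L * W2 \<mu> \<nu>"
proof (rule le_mult_W2I[OF assms(2,3)])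
  show L: "0 \<le> L"
    using f by (rule lipschitz_on_nonneg)
  fix \<gamma>
  assume \<gamma>: "\<gamma> \<in> couplings \<mu> \<nu>"
  note c = couplingsD[OF \<gamma>]
  have fm: "f \<in> borel_measurable borel"
    using f by (rule borel_measurable_lipschitz) simp
  have \<mu>: "(\<integral>x. f x \<partial>\<mu>) = (\<integral>p. f (fst p) \<partial>\<gamma>)" "integrable \<gamma> (\<lambda>p. f (fst p))"
    using integral_distr[OF c(5) fm] integrable_distr_eq[OF c(5) fm]
      integrable_lipschitz_P2[OF f assms(2)] c(3) by simp_all
  have \<nu>: "(\<integral>x. f x \<partial>\<nu>) = (\<integral>p. f (snd p) \<partial>\<gamma>)" "integrable \<gamma> (\<lambda>p. f (snd p))"
    using integral_distr[OF c(6) fm] integrable_distr_eq[OF c(6) fm]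
      integrable_lipschitz_P2[OF f assms(3)] c(4) by simp_all
  note dist = integral_dist_le_sqrt_transport_cost[OF \<gamma> assms(2,3)]
  have "norm ((\<integral>x. f x \<partial>\<mu>) - (\<integral>x. f x \<partial>\<nu>)) = norm (\<integral>p. f (fst p) - f (snd p) \<partial>\<gamma>)"
    using \<mu> \<nu> by simp
  also have "\<dots> \<le> (\<integral>p. L * norm (fst p - snd p) \<partial>\<gamma>)"
    using \<mu>(2) \<nu>(2) dist(1) lipschitz_onD[OF f]
    by (intro Bochner_Integration.integral_norm_bound_integral) (auto simp: dist_norm)
  also have "\<dots> \<le> L * sqrt (enn2real (transport_cost \<gamma>))"
    using dist(2) L by (simp add: mult_left_mono)
  finally show "norm ((\<integral>x. f x \<partial>\<mu>) - (\<integral>x. f x \<partial>\<nu>)) \<le> L * sqrt (enn2real (transport_cost \<gamma>))" .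
qed

lemma integral_param_lipschitz_W2:
  fixes F :: "'a::euclidean_space \<Rightarrow> 'c::real_normed_vector \<Rightarrow> 'b::{banach, second_countable_topology}"
  assumes "0 \<le> L" and F: "\<And>x y z z'. norm (F x z - F y z') \<le> L * (norm (x - y) + norm (z - z'))"
    and "\<mu> \<in> P2" and "\<mu>' \<in> P2"
  shows "norm ((\<integral>x. F x z \<partial>\<mu>) - (\<integral>x. F x z' \<partial>\<mu>')) \<le> L * (norm (z - z') + W2 \<mu> \<mu>')"
proof -
  have lip: "L-lipschitz_on UNIV (\<lambda>x. F x w)" for w
    using assms(1) F[of _ w _ w] by (intro lipschitz_onI) (auto simp: dist_norm)
  interpret prob_space \<mu>
    using assms(3) by (rule P2D)
  have "norm ((\<integral>x. F x z \<partial>\<mu>) - (\<integral>x. F x z' \<partial>\<mu>)) = norm (\<integral>x. F x z - F x z' \<partial>\<mu>)"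
    using integrable_lipschitz_P2[OF lip assms(3)] by simp
  also have "\<dots> \<le> (\<integral>x. L * norm (z - z') \<partial>\<mu>)"
    using integrable_lipschitz_P2[OF lip assms(3)] F[of x z x z' for x]
    by (intro Bochner_Integration.integral_norm_bound_integral) auto
  also have "\<dots> = L * norm (z - z')"
    by (simp add: prob_space)
  finally have "norm ((\<integral>x. F x z \<partial>\<mu>) - (\<integral>x. F x z' \<partial>\<mu>)) \<le> L * norm (z - z')" .
  moreover have "norm ((\<integral>x. F x z' \<partial>\<mu>) - (\<integral>x. F x z' \<partial>\<mu>')) \<le> L * W2 \<mu> \<mu>'"
    using lip assms(3,4) by (rule integral_lipschitz_W2)
  ultimately show ?thesis
    using norm_diff_triangle_le by (fastforce simp: distrib_left)
qed

section \<open>The Stein field\<close>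

definition stein_integrand :: "('a::euclidean_space \<Rightarrow> 'a \<Rightarrow> real) \<Rightarrow> ('a \<Rightarrow> real) \<Rightarrow> 'a \<Rightarrow> 'a \<Rightarrow> 'a"
  where "stein_integrand k V x z = k x z *\<^sub>R grad V x - fst (grad (\<lambda>p. k (fst p) (snd p)) (x, z))"

lemma stein_field_eq_integral:
  fixes k :: "'a::euclidean_space \<Rightarrow> 'a \<Rightarrow> real"
  assumes "\<And>x. V differentiable (at x)" and "integrable lborel (\<lambda>x. exp (- V x))"
    and "\<And>p. (\<lambda>p. k (fst p) (snd p)) differentiable (at p)"
  shows "stein_field k V \<mu> z = (\<integral>x. stein_integrand k V x z \<partial>\<mu>)"
proof -
  have "grad (\<lambda>y. k y z) x = fst (grad (\<lambda>p. k (fst p) (snd p)) (x, z))" for x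
    using grad_partial_fst[OF assms(3)] by simp
  then show ?thesis
    unfolding stein_field_def stein_integrand_def grad_ln_target_density[OF assms(1,2)]
    by (simp flip: integral_minus)
qed

lemma norm_scaleR_diff_le:
  fixes u v :: "'a::real_normed_vector"
  shows "norm (a *\<^sub>R u - b *\<^sub>R v) \<le> \<bar>a - b\<bar> * norm u + \<bar>b\<bar> * norm (u - v)"
proof -
  have "a *\<^sub>R u - b *\<^sub>R v = (a - b) *\<^sub>R u + b *\<^sub>R (u - v)"
    by (simp add: algebra_simps)
  then show ?thesis
    by (metis norm_scaleR norm_triangle_ineq)
qed

lemma stein_integrand_lipschitz:
  fixes k :: "'a::euclidean_space \<Rightarrow> 'a \<Rightarrow> real"
  assumes k_bound: "\<And>x y. \<bar>k x y\<bar> \<le> K"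
    and k_lip: "\<And>x x' y y'. \<bar>k x x' - k y y'\<bar> \<le> D * (norm (x - y) + norm (x' - y'))"
    and grad_V_bound: "\<And>x. norm (grad V x) \<le> C"
    and grad_V_lip: "\<And>x y. norm (grad V x - grad V y) \<le> M * norm (x - y)" and "0 \<le> M"
    and grad_k_lip: "\<And>x x' y y'. norm (grad (\<lambda>p. k (fst p) (snd p)) (x, x')
                                  - grad (\<lambda>p. k (fst p) (snd p)) (y, y'))
                            \<le> D * (norm (x - y) + norm (x' - y'))"
  shows "norm (stein_integrand k V x z - stein_integrand k V y z')
    \<le> (D * C + K * M + D) * (norm (x - y) + norm (z - z'))"
proof -
  define s where "s = norm (x - y) + norm (z - z')"
  define g where "g = grad (\<lambda>p. k (fst p) (snd p))"
  have k_diff: "\<bar>k x z - k y z'\<bar> \<le> D * s"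
    unfolding s_def by (rule k_lip)
  have "M * norm (x - y) \<le> M * s"
    using \<open>0 \<le> M\<close> by (intro mult_left_mono) (auto simp: s_def)
  with grad_V_lip have grad_V_diff: "norm (grad V x - grad V y) \<le> M * s"
    by (rule order_trans)
  have "norm (k x z *\<^sub>R grad V x - k y z' *\<^sub>R grad V y)
      \<le> \<bar>k x z - k y z'\<bar> * norm (grad V x) + \<bar>k y z'\<bar> * norm (grad V x - grad V y)"
    by (rule norm_scaleR_diff_le)
  also have "\<dots> \<le> (D * s) * C + K * (M * s)"
    using k_diff grad_V_diff grad_V_bound[of x] k_bound[of y z'] order_trans[OF abs_ge_zero k_diff]
      order_trans[OF abs_ge_zero k_bound]
    by (intro add_mono mult_mono) auto
  finally have scaled: "norm (k x z *\<^sub>R grad V x - k y z' *\<^sub>R grad V y) \<le> D * s * C + K * (M * s)" .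
  have "norm (fst (g (x, z)) - fst (g (y, z'))) = norm (fst (g (x, z) - g (y, z')))"
    by simp
  also have "\<dots> \<le> norm (g (x, z) - g (y, z'))"
    by (metis norm_fst_le prod.collapse)
  also have "\<dots> \<le> D * s"
    unfolding g_def s_def by (rule grad_k_lip)
  finally have partial: "norm (fst (g (x, z)) - fst (g (y, z'))) \<le> D * s" .
  have "stein_integrand k V x z - stein_integrand k V y z'
      = (k x z *\<^sub>R grad V x - k y z' *\<^sub>R grad V y) - (fst (g (x, z)) - fst (g (y, z')))"
    unfolding stein_integrand_def g_def by (simp add: algebra_simps)
  then have "norm (stein_integrand k V x z - stein_integrand k V y z')
      \<le> norm (k x z *\<^sub>R grad V x - k y z' *\<^sub>R grad V y) + norm (fst (g (x, z)) - fst (g (y, z')))"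
    by (metis norm_triangle_ineq4)
  with scaled partial show ?thesis
    unfolding s_def[symmetric] by (simp add: algebra_simps)
qed

theorem lemma6:
  fixes k :: "'a::euclidean_space \<Rightarrow> 'a \<Rightarrow> real" and V :: "'a \<Rightarrow> real"
  assumes psd: "psd_kernel k"
    and V_C2: "\<forall>x. V differentiable (at x)" "\<forall>x. grad V differentiable (at x)"
              "\<forall>h. continuous_on UNIV (\<lambda>x. hessian V x h)"
    and pi_int: "integrable lborel (\<lambda>x. exp (- V x))"
    and A1: "\<exists>B>0. \<forall>x. in_rkhs k (k x) \<and> rkhs_norm k (k x) \<le> B \<and>
               (\<forall>i\<in>Basis. in_rkhs k (\<lambda>y. grad (\<lambda>x'. k x' y) x \<bullet> i)) \<and>
               sqrt (\<Sum>i\<in>Basis. (rkhs_norm k (\<lambda>y. grad (\<lambda>x'. k x' y) x \<bullet> i))\<^sup>2) \<le> B"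
    and A2: "\<exists>M>0. \<forall>x. onorm (hessian V x) \<le> M"
    and B1: "\<exists>CV. \<forall>x. norm (grad V x) \<le> CV"
    and B2: "\<exists>D>0. continuous_on UNIV (\<lambda>p. k (fst p) (snd p)) \<and>
               (\<forall>x x' y y'. \<bar>k x x' - k y y'\<bar> \<le> D * (norm (x - y) + norm (x' - y'))) \<and>
               (\<forall>p. (\<lambda>p. k (fst p) (snd p)) differentiable (at p)) \<and>
               continuous_on UNIV (grad (\<lambda>p. k (fst p) (snd p))) \<and>
               (\<forall>x x' y y'. norm (grad (\<lambda>p. k (fst p) (snd p)) (x, x')
                                  - grad (\<lambda>p. k (fst p) (snd p)) (y, y'))
                            \<le> D * (norm (x - y) + norm (x' - y')))"
  shows "\<exists>L. \<forall>z z' \<mu> \<mu>'. \<mu> \<in> P2 \<longrightarrow> \<mu>' \<in> P2 \<longrightarrow>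
           norm (stein_field k V \<mu> z - stein_field k V \<mu>' z') \<le> L * (norm (z - z') + W2 \<mu> \<mu>')"
proof -
  obtain B where B: "\<And>x. in_rkhs k (k x)" "\<And>x. rkhs_norm k (k x) \<le> B"
    using A1 by blast
  obtain M where "0 < M" and M: "\<And>x. onorm (hessian V x) \<le> M"
    using A2 by blast
  obtain C where C: "\<And>x. norm (grad V x) \<le> C"
    using B1 by blast
  obtain D where "0 < D"
    and k_lip: "\<And>x x' y y'. \<bar>k x x' - k y y'\<bar> \<le> D * (norm (x - y) + norm (x' - y'))"
    and k_diff: "\<And>p. (\<lambda>p. k (fst p) (snd p)) differentiable (at p)"
    and grad_k_lip: "\<And>x x' y y'. norm (grad (\<lambda>p. k (fst p) (snd p)) (x, x')
                                  - grad (\<lambda>p. k (fst p) (snd p)) (y, y'))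
                            \<le> D * (norm (x - y) + norm (x' - y'))"
    using B2 by blast
  define L where "L = D * C + B\<^sup>2 * M + D"
  have "0 \<le> L"
    unfolding L_def using \<open>0 < D\<close> \<open>0 < M\<close> order_trans[OF norm_ge_zero C] by simp
  moreover have "norm (stein_integrand k V x z - stein_integrand k V y z')
      \<le> L * (norm (x - y) + norm (z - z'))" for x y z z'
    unfolding L_def
    using psd_kernel_abs_le[OF psd B] k_lip C
      norm_grad_diff_le_hessian_bound[OF V_C2(2)[rule_format] M] less_imp_le[OF \<open>0 < M\<close>] grad_k_lip
    by (rule stein_integrand_lipschitz)
  ultimately show ?thesis
    unfolding stein_field_eq_integral[OF V_C2(1)[rule_format] pi_int k_diff]
    by (blast intro: integral_param_lipschitz_W2)
qed

end
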